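(* Let $c<0$, $k>0$ and $R>0$, and let $f(x)=\sum_{n=0}^\infty b_nx^n$ with $b_n=\frac{(-c/4)^n}{n!\,(k,n)}$ (a series converging for all real $x$). Then: (1) $t\mapsto\log f(Re^{-t})$ is convex on $(0,\infty)$, so that $f(\sqrt{xy})\le\sqrt{f(x)f(y)}$ for all $x,y\in(0,\infty)$, with equality if and only if $x=y$. (2) $\log f(x)$ is concave on $(0,\infty)$, so that $\sqrt{f(x)f(y)}\le f((x+y)/2)$ for all $x,y\in(0,\infty)$, with equality if and only if $x=y$. (3) $f$ is convex on $(0,\infty)$, so that $f((x+y)/2)\le\frac12(f(x)+f(y))$ for all $x,y\in(0,\infty)$, with equality if and only if $x=y$. (4) If $k>-1-cR/4$, then $t\mapsto f(R(1-e^{-t}))$ is concave on $(0,\infty)$, so that $\frac{f(x)+f(y)}{2}\le f\big(R-\sqrt{(R-x)(R-y)}\big)$ for all $x,y\in(0,R)$, with equality if and only if $x=y$.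
   Context: $(k,0)=1$ and $(k,n)=k(k+1)\cdots(k+n-1)$ for $n\ge1$. The function $f$ is the generalized-normalized Bessel function of the first kind of order $p$, with $k=p+(b+1)/2$ for real parameters $p,b$. *)

theory Defs
  imports "HOL-Analysis.Analysis"
begin

definition bcoef :: "real \<Rightarrow> real \<Rightarrow> nat \<Rightarrow> real" where
  "bcoef c k n = (- c / 4) ^ n / (fact n * pochhammer k n)"

definition gnbessel :: "real \<Rightarrow> real \<Rightarrow> real \<Rightarrow> real" where
  "gnbessel c k x = (\<Sum>n. bcoef c k n * x ^ n)"

end

theory Submission
  imports Defs
begin

(* Each of the four statements says that a function is strictly convex or concave after a change of
   variable, which by the mean value theorem follows from strict monotonicity of its derivative.
   The coefficients b_n of f are positive, and f' has the coefficients b_n (-c/4)/(k+n).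
   (3) f' is a power series with positive coefficients, hence strictly increasing.
   (2) f'/f is (-c/4) times the mean of the decreasing sequence 1/(k+n) under the weights b_n x^n,
   and (1) the derivative of log f(e^t) is x f'(x)/f(x) at x = e^t, the mean of the sequence n under
   the same weights. Such a mean moves with the monotone sequence as x grows: Chebyshev's sum
   inequality, obtained by symmetrising the double sum of the product of two partial sums.
   (4) Along x = R(1 - e^-t) the derivative is (R - x) f'(x) = sum b_n (R(-c/4)/(k+n) - n) x^n,
   and k + 1 > -cR/4 makes every coefficient of index n >= 1 negative.
   The midpoint inequalities with their equality cases then come from strict midpoint convexity at
   the parameters t = ln x for (1) and t = ln (R / (R - x)) for (4). *)

lemma
  fixes g g' :: "real \<Rightarrow> real"
  assumes A: "connected A"
    and deriv: "\<And>x. x \<in> A \<Longrightarrow> (g has_real_derivative g' x) (at x)"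
    and mono: "\<And>x y. x \<in> A \<Longrightarrow> y \<in> A \<Longrightarrow> x < y \<Longrightarrow> g' x < g' y"
  shows convex_on_realI_strict_mono: "convex_on A g"
    and midpoint_less_realI_strict_mono:
      "x \<in> A \<Longrightarrow> y \<in> A \<Longrightarrow> x < y \<Longrightarrow> g ((x + y) / 2) < (g x + g y) / 2"
proof -
  show "convex_on A g"
    by (rule convex_on_realI[OF A deriv]) (use mono in \<open>force simp: le_less\<close>)+
next
  assume xy: "x \<in> A" "y \<in> A" "x < y"
  define z where "z = (x + y) / 2"
  have ivl: "{x..y} \<subseteq> A"
    using A xy connected_contains_Icc by blast
  have xz: "x < z" "z < y"
    using xy by (auto simp: z_def)
  have "\<exists>\<xi>. x < \<xi> \<and> \<xi> < z \<and> g z - g x = (z - x) * g' \<xi>"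
    using xz ivl by (intro MVT2) (auto intro!: deriv)
  then obtain \<xi> where \<xi>: "x < \<xi>" "\<xi> < z" "g z - g x = (z - x) * g' \<xi>"
    by blast
  have "\<exists>\<eta>. z < \<eta> \<and> \<eta> < y \<and> g y - g z = (y - z) * g' \<eta>"
    using xz ivl by (intro MVT2) (auto intro!: deriv)
  then obtain \<eta> where \<eta>: "z < \<eta>" "\<eta> < y" "g y - g z = (y - z) * g' \<eta>"
    by blast
  have "g' \<xi> < g' \<eta>"
    using \<xi> \<eta> ivl by (intro mono) auto
  moreover have "y - z = z - x" "z - x > 0"
    using xy by (auto simp: z_def field_simps)
  ultimately have "g z - g x < g y - g z"
    using \<xi>(3) \<eta>(3) by simp
  then show "g ((x + y) / 2) < (g x + g y) / 2"
    by (simp add: z_def)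
qed

lemma symmetric_less_imp_le_eq_iff:
  fixes L U :: "'a::linorder \<Rightarrow> 'a \<Rightarrow> 'b::order"
  assumes less: "\<And>x y. P x \<Longrightarrow> P y \<Longrightarrow> x < y \<Longrightarrow> L x y < U x y"
    and sym: "\<And>x y. L x y = L y x" "\<And>x y. U x y = U y x"
    and diag: "\<And>x. P x \<Longrightarrow> L x x = U x x"
    and "P x" "P y"
  shows "L x y \<le> U x y \<and> (L x y = U x y \<longleftrightarrow> x = y)"
proof (cases x y rule: linorder_cases)
  case greater
  then have "L x y < U x y"
    using less[of y x] sym \<open>P x\<close> \<open>P y\<close> by simp
  with greater show ?thesis by auto
qed (use less[of x y] diag[of x] \<open>P x\<close> \<open>P y\<close> in auto)

lemma powser_strict_mono:
  fixes a :: "nat \<Rightarrow> real"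
  assumes a: "\<And>n. n \<ge> 1 \<Longrightarrow> a n \<ge> 0" "a 1 > 0"
    and summable: "summable (\<lambda>n. a n * x ^ n)" "summable (\<lambda>n. a n * y ^ n)"
    and xy: "0 \<le> x" "x < y"
  shows "(\<Sum>n. a n * x ^ n) < (\<Sum>n. a n * y ^ n)"
proof -
  have "a 1 * (y - x) = (\<Sum>n\<in>{1}. a n * y ^ n - a n * x ^ n)"
    by (simp add: algebra_simps)
  also have "\<dots> \<le> (\<Sum>n. a n * y ^ n - a n * x ^ n)"
  proof (rule sum_le_suminf)
    show "summable (\<lambda>n. a n * y ^ n - a n * x ^ n)"
      using summable by (intro summable_diff)
    show "0 \<le> a n * y ^ n - a n * x ^ n" if "n \<in> - {1}" for n
    proof (cases "n = 0")
      case False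
      then have "a n * x ^ n \<le> a n * y ^ n"
        using a xy by (intro mult_left_mono power_mono) auto
      then show ?thesis by simp
    qed simp
  qed simp
  also have "\<dots> = (\<Sum>n. a n * y ^ n) - (\<Sum>n. a n * x ^ n)"
    using suminf_diff[OF summable(2,1)] by simp
  finally have "a 1 * (y - x) \<le> (\<Sum>n. a n * y ^ n) - (\<Sum>n. a n * x ^ n)" .
  moreover have "0 < a 1 * (y - x)"
    using a xy by simp
  ultimately show ?thesis
    by linarith
qed

lemma mono_times_cross_powers_nonneg:
  fixes h :: "nat \<Rightarrow> real" and x y :: real
  assumes "mono h" "0 \<le> x" "x \<le> y"
  shows "0 \<le> (h n - h m) * (y ^ n * x ^ m - x ^ n * y ^ m)"
proof -
  have cross_powers_le: "x ^ j * y ^ i \<le> y ^ j * x ^ i" if "i \<le> j" for i j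
  proof -
    obtain d where j: "j = i + d"
      using \<open>i \<le> j\<close> le_Suc_ex by blast
    have "x ^ i * y ^ i * x ^ d \<le> x ^ i * y ^ i * y ^ d"
      using assms by (intro mult_left_mono power_mono) auto
    then show ?thesis
      by (simp add: j power_add mult_ac)
  qed
  show ?thesis
  proof (cases "m \<le> n")
    case True
    then show ?thesis
      using cross_powers_le[of m n] monoD[OF \<open>mono h\<close>] by (intro mult_nonneg_nonneg) auto
  next
    case False
    then have "h n \<le> h m" "y ^ n * x ^ m \<le> x ^ n * y ^ m"
      using cross_powers_le[of n m] monoD[OF \<open>mono h\<close>] by (auto simp: mult.commute)
    then show ?thesis
      by (simp add: mult_nonpos_nonpos)
  qed
qed

lemma chebyshev_partial_sums_ge:
  fixes w h :: "nat \<Rightarrow> real"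
  assumes w: "\<And>n. w n \<ge> 0" and h: "mono h" and xy: "0 \<le> x" "x \<le> y" and N: "N \<ge> 2"
  shows "w 0 * w 1 * (h 1 - h 0) * (y - x)
    \<le> (\<Sum>n<N. w n * h n * y ^ n) * (\<Sum>n<N. w n * x ^ n)
      - (\<Sum>n<N. w n * h n * x ^ n) * (\<Sum>n<N. w n * y ^ n)" (is "?\<delta> \<le> ?D")
proof -
  define T where "T n m = w n * w m * h n * (y ^ n * x ^ m - x ^ n * y ^ m)" for n m
  define S where "S n m = w n * w m * ((h n - h m) * (y ^ n * x ^ m - x ^ n * y ^ m))" for n m
  have S_nonneg: "S n m \<ge> 0" for n m
    unfolding S_def
    by (intro mult_nonneg_nonneg[OF mult_nonneg_nonneg] w mono_times_cross_powers_nonneg[OF h xy])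
  have "?D = (\<Sum>n<N. \<Sum>m<N. T n m)"
    unfolding T_def sum_product by (simp add: algebra_simps sum_subtractf sum.distrib)
  \<comment> \<open>Chebyshev's symmetrisation: S n m = T n m + T m n.\<close>
  then have "2 * ?D = (\<Sum>n<N. \<Sum>m<N. T n m) + (\<Sum>m<N. \<Sum>n<N. T n m)"
    using sum.swap[of T "{..<N}" "{..<N}"] by simp
  also have "\<dots> = (\<Sum>n<N. \<Sum>m<N. S n m)"
    by (simp add: S_def T_def sum.distrib[symmetric] algebra_simps)
  also have "\<dots> \<ge> (\<Sum>n<2. \<Sum>m<N. S n m)"
    using N S_nonneg by (intro sum_mono2 sum_nonneg) auto
  also have "(\<Sum>n<2. \<Sum>m<N. S n m) \<ge> (\<Sum>n<2. \<Sum>m<2. S n m)"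
    using N S_nonneg by (intro sum_mono sum_mono2) auto
  also have "(\<Sum>n<2. \<Sum>m<2. S n m) = 2 * ?\<delta>"
    by (simp add: S_def numeral_2_eq_2 algebra_simps)
  finally show ?thesis
    by simp
qed

lemma powser_weighted_mean_strict_mono:
  fixes w h :: "nat \<Rightarrow> real"
  assumes w: "\<And>n. w n \<ge> 0" "w 0 > 0" "w 1 > 0"
    and h: "mono h" "h 0 < h 1"
    and summable: "\<And>z. summable (\<lambda>n. w n * z ^ n)" "\<And>z. summable (\<lambda>n. w n * h n * z ^ n)"
    and xy: "0 \<le> x" "x < y"
  shows "(\<Sum>n. w n * h n * x ^ n) * (\<Sum>n. w n * y ^ n)
    < (\<Sum>n. w n * h n * y ^ n) * (\<Sum>n. w n * x ^ n)"
proof -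
  have "(\<lambda>N. (\<Sum>n<N. w n * h n * y ^ n) * (\<Sum>n<N. w n * x ^ n)
        - (\<Sum>n<N. w n * h n * x ^ n) * (\<Sum>n<N. w n * y ^ n))
      \<longlonglongrightarrow> (\<Sum>n. w n * h n * y ^ n) * (\<Sum>n. w n * x ^ n)
        - (\<Sum>n. w n * h n * x ^ n) * (\<Sum>n. w n * y ^ n)"
    by (intro tendsto_intros summable_LIMSEQ summable)
  then have "w 0 * w 1 * (h 1 - h 0) * (y - x) \<le> (\<Sum>n. w n * h n * y ^ n) * (\<Sum>n. w n * x ^ n)
      - (\<Sum>n. w n * h n * x ^ n) * (\<Sum>n. w n * y ^ n)"
    by (rule LIMSEQ_le_const) (use chebyshev_partial_sums_ge[of w h x y] w(1) h(1) xy in force)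
  moreover have "w 0 * w 1 * (h 1 - h 0) * (y - x) > 0"
    using w h xy by simp
  ultimately show ?thesis
    by simp
qed

lemma sqrt_mult_eq_exp_ln:
  fixes a b :: real
  assumes "0 < a" "0 < b"
  shows "sqrt (a * b) = exp ((ln a + ln b) / 2)"
proof (rule real_sqrt_unique)
  show "(exp ((ln a + ln b) / 2))\<^sup>2 = a * b"
    using assms by (simp add: power2_eq_square exp_add[symmetric] exp_add)
qed simp

lemma
  fixes R x y :: real
  assumes "R > 0" "x < R" "y < R"
  shows one_minus_exp_ln_ratio: "R * (1 - exp (- ln (R / (R - x)))) = x"
    and one_minus_exp_ln_ratio_midpoint:
      "R * (1 - exp (- ((ln (R / (R - x)) + ln (R / (R - y))) / 2))) = R - sqrt ((R - x) * (R - y))"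
proof -
  show "R * (1 - exp (- ln (R / (R - x)))) = x"
    using assms by (simp add: exp_minus field_simps)
  have "- ((ln (R / (R - x)) + ln (R / (R - y))) / 2) = (ln (R - x) + ln (R - y)) / 2 - ln R"
    using assms by (simp add: ln_div field_simps)
  then have "exp (- ((ln (R / (R - x)) + ln (R / (R - y))) / 2)) = sqrt ((R - x) * (R - y)) / R"
    using assms by (simp add: exp_diff sqrt_mult_eq_exp_ln)
  then show "R * (1 - exp (- ((ln (R / (R - x)) + ln (R / (R - y))) / 2))) = R - sqrt ((R - x) * (R - y))"
    using assms by (simp add: field_simps)
qed

definition gnbessel_deriv :: "real \<Rightarrow> real \<Rightarrow> real \<Rightarrow> real" where
  "gnbessel_deriv c k x = (\<Sum>n. diffs (bcoef c k) n * x ^ n)"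

context
  fixes c k :: real
  assumes c: "c < 0" and k: "k > 0"
begin

lemma bcoef_pos: "bcoef c k n > 0"
  unfolding bcoef_def using c k by (intro divide_pos_pos mult_pos_pos pochhammer_pos) auto

lemma diffs_bcoef: "diffs (bcoef c k) n = bcoef c k n * (- c / 4) / (k + n)"
proof -
  have "bcoef c k (Suc n) = bcoef c k n * (- c / 4) / ((k + n) * Suc n)"
    unfolding bcoef_def using k by (simp add: pochhammer_Suc field_simps)
  then show ?thesis
    by (simp add: diffs_def del: of_nat_Suc)
qed

lemma diffs_bcoef_pos: "diffs (bcoef c k) n > 0"
  unfolding diffs_bcoef using bcoef_pos[of n] c k by (intro divide_pos_pos mult_pos_pos) auto

(* Since (k,n) \<ge> k^n, the series is dominated by the exponential series at (-c/4)|x|/k. *)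
lemma summable_bcoef: "summable (\<lambda>n. bcoef c k n * x ^ n)"
proof (rule summable_comparison_test)
  show "summable (\<lambda>n. inverse (fact n) * (- c / 4 * \<bar>x\<bar> / k) ^ n)"
    by (rule summable_exp)
  show "\<exists>N. \<forall>n\<ge>N. norm (bcoef c k n * x ^ n) \<le> inverse (fact n) * (- c / 4 * \<bar>x\<bar> / k) ^ n"
  proof (intro exI allI impI)
    fix n :: nat
    have "k ^ n = (\<Prod>i\<in>{0..<n}. k)"
      by simp
    also have "\<dots> \<le> pochhammer k n"
      unfolding pochhammer_prod using k by (intro prod_mono) auto
    finally have "k ^ n \<le> pochhammer k n" .
    have "norm (bcoef c k n * x ^ n) = (- c / 4) ^ n * \<bar>x\<bar> ^ n / (fact n * pochhammer k n)"
      using c k pochhammer_pos[of k n]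
      by (simp add: bcoef_def abs_mult power_abs)
    also have "\<dots> \<le> (- c / 4) ^ n * \<bar>x\<bar> ^ n / (fact n * k ^ n)"
      using c k pochhammer_pos[of k n] \<open>k ^ n \<le> pochhammer k n\<close>
      by (intro divide_left_mono mult_left_mono mult_pos_pos mult_nonneg_nonneg zero_le_power) auto
    also have "\<dots> = inverse (fact n) * (- c / 4 * \<bar>x\<bar> / k) ^ n"
      unfolding power_divide power_mult_distrib by (simp add: field_simps)
    finally show "norm (bcoef c k n * x ^ n) \<le> inverse (fact n) * (- c / 4 * \<bar>x\<bar> / k) ^ n" .
  qed
qed

lemma summable_diffs_bcoef: "summable (\<lambda>n. diffs (bcoef c k) n * x ^ n)"
  by (rule termdiff_converges_all[OF summable_bcoef])

lemma gnbessel_has_deriv: "(gnbessel c k has_real_derivative gnbessel_deriv c k x) (at x)"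
  unfolding gnbessel_def[abs_def] gnbessel_deriv_def
  by (rule termdiffs_strong_converges_everywhere[OF summable_bcoef])

lemma gnbessel_pos:
  assumes "0 \<le> x"
  shows "gnbessel c k x > 0"
proof -
  have "(\<Sum>n\<in>{0}. bcoef c k n * x ^ n) \<le> gnbessel c k x"
    unfolding gnbessel_def using assms bcoef_pos
    by (intro sum_le_suminf summable_bcoef)
      (auto intro!: mult_nonneg_nonneg simp: less_imp_le[OF bcoef_pos])
  then show ?thesis
    using bcoef_pos[of 0] by simp
qed

lemma sums_x_gnbessel_deriv:
  "(\<lambda>n. bcoef c k n * real n * x ^ n) sums (x * gnbessel_deriv c k x)"
proof -
  have "(\<lambda>n. x * (real n * bcoef c k n * x ^ (n - 1))) sums (x * gnbessel_deriv c k x)"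
    using sums_mult[OF diffs_equiv[OF summable_diffs_bcoef]] by (simp add: gnbessel_deriv_def)
  moreover have "(\<lambda>n. x * (real n * bcoef c k n * x ^ (n - 1))) = (\<lambda>n. bcoef c k n * real n * x ^ n)"
  proof
    show "x * (real n * bcoef c k n * x ^ (n - 1)) = bcoef c k n * real n * x ^ n" for n
      by (cases n) auto
  qed
  ultimately show ?thesis
    by simp
qed

lemma sums_gnbessel_deriv:
  "(\<lambda>n. bcoef c k n * (- 1 / (k + n)) * x ^ n) sums (4 / c * gnbessel_deriv c k x)"
proof -
  have "(\<lambda>n. 4 / c * (diffs (bcoef c k) n * x ^ n)) sums (4 / c * gnbessel_deriv c k x)"
    unfolding gnbessel_deriv_def by (intro sums_mult summable_sums summable_diffs_bcoef)
  moreover have "4 / c * (diffs (bcoef c k) n * x ^ n) = bcoef c k n * (- 1 / (k + n)) * x ^ n" for n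
    using c k by (simp add: diffs_bcoef field_simps add_pos_nonneg)
  ultimately show ?thesis
    by simp
qed

lemma sums_dist_times_gnbessel_deriv:
  "(\<lambda>n. bcoef c k n * (R * (- c / 4) / (k + n) - n) * x ^ n) sums ((R - x) * gnbessel_deriv c k x)"
proof -
  have "(\<lambda>n. R * (diffs (bcoef c k) n * x ^ n) - bcoef c k n * real n * x ^ n)
      sums (R * gnbessel_deriv c k x - x * gnbessel_deriv c k x)"
    unfolding gnbessel_deriv_def
    by (intro sums_diff sums_mult summable_sums summable_diffs_bcoef
        sums_x_gnbessel_deriv[unfolded gnbessel_deriv_def])
  then show ?thesis
    by (simp add: diffs_bcoef algebra_simps)
qed

lemma gnbessel_deriv_strict_mono:
  assumes "0 \<le> x" "x < y"
  shows "gnbessel_deriv c k x < gnbessel_deriv c k y"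
  unfolding gnbessel_deriv_def
  by (rule powser_strict_mono)
    (use assms diffs_bcoef_pos summable_diffs_bcoef in \<open>auto intro: less_imp_le\<close>)

lemma gnbessel_log_deriv_strict_antimono:
  assumes "0 \<le> x" "x < y"
  shows "gnbessel_deriv c k y / gnbessel c k y < gnbessel_deriv c k x / gnbessel c k x"
proof -
  have "mono (\<lambda>n. - 1 / (k + real n))"
    using k by (auto intro!: monoI simp: divide_simps)
  moreover have "- 1 / k < - 1 / (k + 1)"
    using k by (simp add: divide_simps)
  ultimately have "(\<Sum>n. bcoef c k n * (- 1 / (k + n)) * x ^ n) * gnbessel c k y
      < (\<Sum>n. bcoef c k n * (- 1 / (k + n)) * y ^ n) * gnbessel c k x"
    unfolding gnbessel_def using assms bcoef_pos summable_bcoef sums_gnbessel_deriv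
    by (intro powser_weighted_mean_strict_mono) (auto intro: less_imp_le sums_summable)
  then have "(4 / c * gnbessel_deriv c k x) * gnbessel c k y < (4 / c * gnbessel_deriv c k y) * gnbessel c k x"
    unfolding sums_gnbessel_deriv[THEN sums_unique, symmetric] .
  then have "gnbessel_deriv c k y * gnbessel c k x < gnbessel_deriv c k x * gnbessel c k y"
    using c by (simp add: divide_less_cancel mult_ac)
  then show ?thesis
    using gnbessel_pos assms by (simp add: divide_simps)
qed

lemma gnbessel_elasticity_strict_mono:
  assumes "0 \<le> x" "x < y"
  shows "x * gnbessel_deriv c k x / gnbessel c k x < y * gnbessel_deriv c k y / gnbessel c k y"
proof -
  have "(x * gnbessel_deriv c k x) * gnbessel c k y < (y * gnbessel_deriv c k y) * gnbessel c k x"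
    using powser_weighted_mean_strict_mono[of "bcoef c k" real x y]
      assms bcoef_pos summable_bcoef sums_x_gnbessel_deriv
    unfolding gnbessel_def by (auto simp: sums_iff mono_def intro: less_imp_le)
  then show ?thesis
    using gnbessel_pos assms by (simp add: divide_simps)
qed

lemma dist_times_gnbessel_deriv_strict_antimono:
  assumes kR: "k > - 1 - c * R / 4" and "0 \<le> x" "x < y"
  shows "(R - y) * gnbessel_deriv c k y < (R - x) * gnbessel_deriv c k x"
proof -
  define e where "e n = bcoef c k n * (n - R * (- c / 4) / (k + n))" for n
  have e_pos: "e n > 0" if "n \<ge> 1" for n
  proof -
    have kn: "0 < k + n"
      using k by simp
    have "R * (- c / 4) < (k + 1) * 1"
      using kR by (simp add: algebra_simps)
    also have "\<dots> \<le> n * (k + n)"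
      using k that by (subst mult.commute, intro mult_mono) auto
    finally have "R * (- c / 4) / (k + n) < n"
      by (simp only: pos_divide_less_eq[OF kn])
    then show ?thesis
      unfolding e_def using bcoef_pos[of n] by simp
  qed
  have e_sums: "(\<lambda>n. e n * z ^ n) sums (- ((R - z) * gnbessel_deriv c k z))" for z
    using sums_minus[OF sums_dist_times_gnbessel_deriv[of R z]] by (simp add: e_def algebra_simps)
  have "(\<Sum>n. e n * x ^ n) < (\<Sum>n. e n * y ^ n)"
    using assms e_pos e_sums by (intro powser_strict_mono) (auto intro: less_imp_le sums_summable)
  then show ?thesis
    using e_sums by (simp add: sums_iff)
qed

lemma ln_gnbessel_has_deriv:
  assumes "0 \<le> x"
  shows "((\<lambda>x. ln (gnbessel c k x)) has_real_derivative gnbessel_deriv c k x / gnbessel c k x) (at x)"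
  using DERIV_chain2[OF DERIV_ln gnbessel_has_deriv] gnbessel_pos[OF assms]
  by (simp add: divide_inverse mult.commute)

lemma ln_gnbessel_comp_has_deriv:
  assumes "(h has_real_derivative h t * d) (at t)" "h t > 0"
  shows "((\<lambda>t. ln (gnbessel c k (h t))) has_real_derivative
    h t * gnbessel_deriv c k (h t) / gnbessel c k (h t) * d) (at t)"
  using DERIV_chain2[OF ln_gnbessel_has_deriv assms(1)] assms(2) by (simp add: mult_ac)

lemma convex_on_ln_gnbessel_exp_neg:
  assumes "R > 0"
  shows "convex_on {0<..} (\<lambda>t. ln (gnbessel c k (R * exp (- t))))"
proof (rule convex_on_realI_strict_mono)
  let ?Q = "\<lambda>x. x * gnbessel_deriv c k x / gnbessel c k x"
  show "((\<lambda>t. ln (gnbessel c k (R * exp (- t)))) has_real_derivative ?Q (R * exp (- t)) * - 1) (at t)"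
    for t
    using assms
    by (intro ln_gnbessel_comp_has_deriv[where h = "\<lambda>t. R * exp (- t)"])
      (auto intro!: derivative_eq_intros)
  show "?Q (R * exp (- s)) * - 1 < ?Q (R * exp (- t)) * - 1" if "s < t" for s t
    using assms that by (simp add: gnbessel_elasticity_strict_mono)
qed simp

lemma gnbessel_sqrt_mult_le:
  assumes "x > 0" "y > 0"
  shows "gnbessel c k (sqrt (x * y)) \<le> sqrt (gnbessel c k x * gnbessel c k y) \<and>
    (gnbessel c k (sqrt (x * y)) = sqrt (gnbessel c k x * gnbessel c k y) \<longleftrightarrow> x = y)"
proof (rule symmetric_less_imp_le_eq_iff[where P = "\<lambda>x. x > 0"])
  fix x y :: real
  assume xy: "x > 0" "y > 0" "x < y"
  let ?Q = "\<lambda>x. x * gnbessel_deriv c k x / gnbessel c k x"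
  have "ln (gnbessel c k (exp ((ln x + ln y) / 2)))
      < (ln (gnbessel c k (exp (ln x))) + ln (gnbessel c k (exp (ln y)))) / 2"
  proof (rule midpoint_less_realI_strict_mono[where A = UNIV])
    show "((\<lambda>t. ln (gnbessel c k (exp t))) has_real_derivative ?Q (exp t) * 1) (at t)" for t
      by (intro ln_gnbessel_comp_has_deriv[where h = exp]) (auto intro!: derivative_eq_intros)
    show "?Q (exp s) * 1 < ?Q (exp t) * 1" if "s < t" for s t
      using that by (simp add: gnbessel_elasticity_strict_mono)
  qed (use xy in auto)
  then have "exp (ln (gnbessel c k (sqrt (x * y))))
      < exp ((ln (gnbessel c k x) + ln (gnbessel c k y)) / 2)"
    using xy by (simp add: sqrt_mult_eq_exp_ln)
  then show "gnbessel c k (sqrt (x * y)) < sqrt (gnbessel c k x * gnbessel c k y)"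
    using xy gnbessel_pos by (simp add: sqrt_mult_eq_exp_ln)
qed (use assms gnbessel_pos in \<open>auto simp: mult.commute less_imp_le\<close>)

lemma
  shows concave_on_ln_gnbessel: "concave_on {0<..} (\<lambda>x. ln (gnbessel c k x))"
    and sqrt_gnbessel_mult_le_midpoint: "x > 0 \<Longrightarrow> y > 0 \<Longrightarrow>
      sqrt (gnbessel c k x * gnbessel c k y) \<le> gnbessel c k ((x + y) / 2) \<and>
      (sqrt (gnbessel c k x * gnbessel c k y) = gnbessel c k ((x + y) / 2) \<longleftrightarrow> x = y)"
proof -
  have deriv: "((\<lambda>x. - ln (gnbessel c k x)) has_real_derivative
      - (gnbessel_deriv c k x / gnbessel c k x)) (at x)" if "x \<in> {0<..}" for x
    using that by (auto intro!: DERIV_minus ln_gnbessel_has_deriv)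
  have mono: "- (gnbessel_deriv c k x / gnbessel c k x) < - (gnbessel_deriv c k y / gnbessel c k y)"
    if "x \<in> {0<..}" "y \<in> {0<..}" "x < y" for x y
    using that gnbessel_log_deriv_strict_antimono by simp
  show "concave_on {0<..} (\<lambda>x. ln (gnbessel c k x))"
    unfolding concave_on_def by (rule convex_on_realI_strict_mono[OF _ deriv mono]) simp
  show "sqrt (gnbessel c k x * gnbessel c k y) \<le> gnbessel c k ((x + y) / 2) \<and>
      (sqrt (gnbessel c k x * gnbessel c k y) = gnbessel c k ((x + y) / 2) \<longleftrightarrow> x = y)"
    if "x > 0" "y > 0"
  proof (rule symmetric_less_imp_le_eq_iff[where P = "\<lambda>x. x > 0"])
    fix x y :: real
    assume xy: "x > 0" "y > 0" "x < y"
    have "- ln (gnbessel c k ((x + y) / 2)) < (- ln (gnbessel c k x) + - ln (gnbessel c k y)) / 2"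
      by (rule midpoint_less_realI_strict_mono[where A = "{0<..}", OF _ deriv mono]) (use xy in auto)
    then have "exp ((ln (gnbessel c k x) + ln (gnbessel c k y)) / 2) < exp (ln (gnbessel c k ((x + y) / 2)))"
      by simp
    then show "sqrt (gnbessel c k x * gnbessel c k y) < gnbessel c k ((x + y) / 2)"
      using xy gnbessel_pos by (simp add: sqrt_mult_eq_exp_ln)
  qed (use that gnbessel_pos in \<open>auto simp: mult.commute add.commute less_imp_le\<close>)
qed

lemma
  shows convex_on_gnbessel: "convex_on {0<..} (gnbessel c k)"
    and gnbessel_midpoint_le: "x > 0 \<Longrightarrow> y > 0 \<Longrightarrow>
      gnbessel c k ((x + y) / 2) \<le> (gnbessel c k x + gnbessel c k y) / 2 \<and>
      (gnbessel c k ((x + y) / 2) = (gnbessel c k x + gnbessel c k y) / 2 \<longleftrightarrow> x = y)"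
proof -
  have mono: "gnbessel_deriv c k x < gnbessel_deriv c k y"
    if "x \<in> {0<..}" "y \<in> {0<..}" "x < y" for x y
    using that gnbessel_deriv_strict_mono by simp
  show "convex_on {0<..} (gnbessel c k)"
    by (rule convex_on_realI_strict_mono[OF _ gnbessel_has_deriv mono]) simp
  show "gnbessel c k ((x + y) / 2) \<le> (gnbessel c k x + gnbessel c k y) / 2 \<and>
      (gnbessel c k ((x + y) / 2) = (gnbessel c k x + gnbessel c k y) / 2 \<longleftrightarrow> x = y)"
    if "x > 0" "y > 0"
  proof (rule symmetric_less_imp_le_eq_iff[where P = "\<lambda>x. x > 0"])
    show "gnbessel c k ((x + y) / 2) < (gnbessel c k x + gnbessel c k y) / 2"
      if "x > 0" "y > 0" "x < y" for x y
      by (rule midpoint_less_realI_strict_mono[where A = "{0<..}", OF _ gnbessel_has_deriv mono])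
        (use that in auto)
  qed (use that in \<open>auto simp: add.commute\<close>)
qed

lemma
  assumes R: "R > 0" and kR: "k > - 1 - c * R / 4"
  shows concave_on_gnbessel_one_minus_exp: "concave_on {0<..} (\<lambda>t. gnbessel c k (R * (1 - exp (- t))))"
    and gnbessel_midpoint_le_one_minus_sqrt: "x \<in> {0<..<R} \<Longrightarrow> y \<in> {0<..<R} \<Longrightarrow>
      (gnbessel c k x + gnbessel c k y) / 2 \<le> gnbessel c k (R - sqrt ((R - x) * (R - y))) \<and>
      ((gnbessel c k x + gnbessel c k y) / 2 = gnbessel c k (R - sqrt ((R - x) * (R - y))) \<longleftrightarrow> x = y)"
proof -
  define u where "u t = R * (1 - exp (- t))" for t
  have deriv: "((\<lambda>t. - gnbessel c k (u t)) has_real_derivative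
      - ((R - u t) * gnbessel_deriv c k (u t))) (at t)" if "t \<in> {0<..}" for t
  proof -
    have "(u has_real_derivative R * exp (- t)) (at t)"
      unfolding u_def[abs_def] by (auto intro!: derivative_eq_intros)
    from DERIV_minus[OF DERIV_chain2[OF gnbessel_has_deriv this]] show ?thesis
      by (simp add: u_def algebra_simps)
  qed
  have mono: "- ((R - u s) * gnbessel_deriv c k (u s)) < - ((R - u t) * gnbessel_deriv c k (u t))"
    if "s \<in> {0<..}" "t \<in> {0<..}" "s < t" for s t
  proof -
    have "0 \<le> u s" "u s < u t"
      using that R by (auto simp: u_def)
    then show ?thesis
      using dist_times_gnbessel_deriv_strict_antimono[OF kR] by simp
  qed
  show "concave_on {0<..} (\<lambda>t. gnbessel c k (R * (1 - exp (- t))))"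
    using convex_on_realI_strict_mono[where A = "{0<..}", OF _ deriv mono]
    unfolding concave_on_def u_def by simp
  show "(gnbessel c k x + gnbessel c k y) / 2 \<le> gnbessel c k (R - sqrt ((R - x) * (R - y))) \<and>
      ((gnbessel c k x + gnbessel c k y) / 2 = gnbessel c k (R - sqrt ((R - x) * (R - y))) \<longleftrightarrow> x = y)"
    if "x \<in> {0<..<R}" "y \<in> {0<..<R}"
  proof (rule symmetric_less_imp_le_eq_iff[where P = "\<lambda>x. x \<in> {0<..<R}"])
    fix x y :: real
    assume xy: "x \<in> {0<..<R}" "y \<in> {0<..<R}" "x < y"
    let ?s = "ln (R / (R - x))" and ?t = "ln (R / (R - y))"
    have "0 < ?s" "?s < ?t"
      using xy R by (simp_all add: divide_simps)
    then have "- gnbessel c k (u ((?s + ?t) / 2)) < (- gnbessel c k (u ?s) + - gnbessel c k (u ?t)) / 2"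
      by (intro midpoint_less_realI_strict_mono[where A = "{0<..}", OF _ deriv mono]) auto
    then show "(gnbessel c k x + gnbessel c k y) / 2 < gnbessel c k (R - sqrt ((R - x) * (R - y)))"
      using xy R by (simp add: u_def one_minus_exp_ln_ratio one_minus_exp_ln_ratio_midpoint)
  qed (use that in \<open>auto simp: mult.commute add.commute\<close>)
qed

end

theorem theorem3p6:
  fixes c k R :: real
  assumes "c < 0" and "k > 0" and "R > 0"
  defines "f \<equiv> gnbessel c k"
  shows
   "(convex_on {0<..} (\<lambda>t. ln (f (R * exp (- t)))) \<and>
     (\<forall>x>0. \<forall>y>0. f (sqrt (x * y)) \<le> sqrt (f x * f y) \<and>
        (f (sqrt (x * y)) = sqrt (f x * f y) \<longleftrightarrow> x = y)))
  \<and> (concave_on {0<..} (\<lambda>x. ln (f x)) \<and>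
     (\<forall>x>0. \<forall>y>0. sqrt (f x * f y) \<le> f ((x + y) / 2) \<and>
        (sqrt (f x * f y) = f ((x + y) / 2) \<longleftrightarrow> x = y)))
  \<and> (convex_on {0<..} f \<and>
     (\<forall>x>0. \<forall>y>0. f ((x + y) / 2) \<le> (f x + f y) / 2 \<and>
        (f ((x + y) / 2) = (f x + f y) / 2 \<longleftrightarrow> x = y)))
  \<and> (k > - 1 - c * R / 4 \<longrightarrow>
     (concave_on {0<..} (\<lambda>t. f (R * (1 - exp (- t)))) \<and>
      (\<forall>x\<in>{0<..<R}. \<forall>y\<in>{0<..<R}.
         (f x + f y) / 2 \<le> f (R - sqrt ((R - x) * (R - y))) \<and>
         ((f x + f y) / 2 = f (R - sqrt ((R - x) * (R - y))) \<longleftrightarrow> x = y))))"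
proof -
  note part1 = convex_on_ln_gnbessel_exp_neg[OF assms(1-3)] gnbessel_sqrt_mult_le[OF assms(1,2)]
  note part2 = concave_on_ln_gnbessel[OF assms(1,2)] sqrt_gnbessel_mult_le_midpoint[OF assms(1,2)]
  note part3 = convex_on_gnbessel[OF assms(1,2)] gnbessel_midpoint_le[OF assms(1,2)]
  note part4 = concave_on_gnbessel_one_minus_exp[OF assms(1-3)]
    gnbessel_midpoint_le_one_minus_sqrt[OF assms(1-3)]
  show ?thesis
    unfolding f_def using part1 part2 part3 part4 by blast
qed

end
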